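(* Let $\Gamma_1$ and $\Gamma_2$ be two metric theories built over a finite alphabet $\mathcal{A}$. Then $\Gamma_1$ and $\Gamma_2$ are strongly equivalent if and only if $\Gamma_1$ and $\Gamma_2$ are MHT-equivalent (i.e. have exactly the same MHT models).
   Context: Write $[m,n)=\{i\in\mathbb{N}\mid m\le i<n\}$, $(m,n]=\{i\in\mathbb{N}\mid m<i\le n\}$. Metric formulas over $\mathcal{A}$: $\varphi::=p\mid\bot\mid\varphi_1\wedge\varphi_2\mid\varphi_1\vee\varphi_2\mid\varphi_1\to\varphi_2\mid\bullet_I\varphi\mid\varphi_1\mathsf{S}_I\varphi_2\mid\varphi_1\mathsf{T}_I\varphi_2\mid\circ_I\varphi\mid\varphi_1\mathsf{U}_I\varphi_2\mid\varphi_1\mathsf{R}_I\varphi_2$, $p\in\mathcal{A}$, $I=[m,n)$ with $m\in\mathbb{N}$, $n\in\mathbb{N}\cup\{\omega\}$; a metric theory is a (possibly infinite) set of metric formulas. A timed HT-trace of length $\lambda\in\mathbb{N}\cup\{\omega\}$ is $\mathbf{M}=(\langle\mathbf{H},\mathbf{T}\rangle,\tau)$ with $H_i\subseteq T_i\subseteq\mathcal{A}$ for $i\in[0,\lambda)$ and $\tau:[0,\lambda)\to\mathbb{N}$, $\tau(0)=0$, $\tau(i)\le\tau(i+1)$. Standing assumption: all timed traces are strict, i.e. $\tau(i)<\tau(i+1)$ whenever $i+1<\lambda$. Satisfaction at $k\in[0,\lambda)$: $\bot$ never; $p$ iff $p\in H_k$; $\wedge,\vee$ as usual; $\varphi\to\psi$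 iff for both $\mathbf{M}'=\mathbf{M}$ and $\mathbf{M}'=(\langle\mathbf{T},\mathbf{T}\rangle,\tau)$, $\mathbf{M}',k\not\models\varphi$ or $\mathbf{M}',k\models\psi$; $\bullet_I\varphi$ iff $k>0$, $\mathbf{M},k-1\models\varphi$, $\tau(k)-\tau(k-1)\in I$; $\varphi\mathsf{S}_I\psi$ iff for some $j\in[0,k]$ with $\tau(k)-\tau(j)\in I$, $\mathbf{M},j\models\psi$ and $\mathbf{M},i\models\varphi$ for all $i\in(j,k]$; $\varphi\mathsf{T}_I\psi$ iff for all $j\in[0,k]$ with $\tau(k)-\tau(j)\in I$, $\mathbf{M},j\models\psi$ or $\mathbf{M},i\models\varphi$ for some $i\in(j,k]$; $\circ_I\varphi$ iff $k+1<\lambda$, $\mathbf{M},k+1\models\varphi$, $\tau(k+1)-\tau(k)\in I$; $\varphi\mathsf{U}_I\psi$ iff for some $j\in[k,\lambda)$ with $\tau(j)-\tau(k)\in I$, $\mathbf{M},j\models\psi$ and $\mathbf{M},i\models\varphi$ for all $i\in[k,j)$; $\varphi\mathsf{R}_I\psi$ iff for all $j\in[k,\lambda)$ with $\tau(j)-\tau(k)\in I$, $\mathbf{M},j\models\psi$ or $\mathbf{M},i\models\varphi$ for some $i\in[k,j)$. An MHT model of a theory $\Gamma$ is a timed HT-trace $\mathbf{M}$ (of any length) with $\mathbf{M},0\models\varphi$ for all $\varphi\in\Gamma$; $\mathrm{MHT}(\Gamma)$ is the set of them. A total trace $(\langle\mathbf{T},\mathbf{T}\rangle,\tau)\in\mathrm{MHT}(\Gamma)$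 is a metric equilibrium model of $\Gamma$ if there is no $\mathbf{H}<\mathbf{T}$ (i.e. $H_i\subseteq T_i$ for all $i$ and $\mathbf{H}\neq\mathbf{T}$) with $(\langle\mathbf{H},\mathbf{T}\rangle,\tau)\in\mathrm{MHT}(\Gamma)$; $\mathrm{MEL}(\Gamma)$ denotes the set of these. $\Gamma_1,\Gamma_2$ are strongly equivalent if $\mathrm{MEL}(\Gamma_1\cup\Delta)=\mathrm{MEL}(\Gamma_2\cup\Delta)$ for every metric theory $\Delta$. *)

theory Defs
  imports Main "HOL-Library.Extended_Nat"
begin

text \<open>Intervals [m,n) with m a natural number and n in nat extended by omega.\<close>
type_synonym interval = "nat \<times> enat"

definition in_int :: "nat \<Rightarrow> interval \<Rightarrow> bool" where
  "in_int d I \<longleftrightarrow> fst I \<le> d \<and> enat d < snd I"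

datatype 'a mformula =
    Atom 'a
  | Bot
  | And "'a mformula" "'a mformula"
  | Or "'a mformula" "'a mformula"
  | Impl "'a mformula" "'a mformula"
  | Prev interval "'a mformula"
  | Since interval "'a mformula" "'a mformula"
  | Trigger interval "'a mformula" "'a mformula"
  | Next interval "'a mformula"
  | Until interval "'a mformula" "'a mformula"
  | Release interval "'a mformula" "'a mformula"

text \<open>A timed HT-trace: length lambda, here-component H, there-component T, timing tau.
  Only the values at positions i < lambda are meaningful.\<close>
datatype 'a htrace = HTrace (len: enat) (hh: "nat \<Rightarrow> 'a set") (tt: "nat \<Rightarrow> 'a set") (tau: "nat \<Rightarrow> nat")

definition wf_trace :: "'a htrace \<Rightarrow> bool" where
  "wf_trace M \<longleftrightarrow> 0 < len M \<and> (\<forall>i. enat i < len M \<longrightarrow> hh M i \<subseteq> tt M i)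
     \<and> tau M 0 = 0 \<and> (\<forall>i. enat (Suc i) < len M \<longrightarrow> tau M i < tau M (Suc i))"

primrec sat :: "enat \<Rightarrow> (nat \<Rightarrow> 'a set) \<Rightarrow> (nat \<Rightarrow> 'a set) \<Rightarrow> (nat \<Rightarrow> nat) \<Rightarrow> nat \<Rightarrow> 'a mformula \<Rightarrow> bool" where
  "sat l H T t k (Atom p) \<longleftrightarrow> p \<in> H k"
| "sat l H T t k Bot \<longleftrightarrow> False"
| "sat l H T t k (And f g) \<longleftrightarrow> sat l H T t k f \<and> sat l H T t k g"
| "sat l H T t k (Or f g) \<longleftrightarrow> sat l H T t k f \<or> sat l H T t k g"
| "sat l H T t k (Impl f g) \<longleftrightarrow> (sat l H T t k f \<longrightarrow> sat l H T t k g) \<and> (sat l T T t k f \<longrightarrow> sat l T T t k g)"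
| "sat l H T t k (Prev I f) \<longleftrightarrow> 0 < k \<and> sat l H T t (k - 1) f \<and> in_int (t k - t (k - 1)) I"
| "sat l H T t k (Since I f g) \<longleftrightarrow> (\<exists>j\<le>k. in_int (t k - t j) I \<and> sat l H T t j g \<and> (\<forall>i. j < i \<and> i \<le> k \<longrightarrow> sat l H T t i f))"
| "sat l H T t k (Trigger I f g) \<longleftrightarrow> (\<forall>j\<le>k. in_int (t k - t j) I \<longrightarrow> sat l H T t j g \<or> (\<exists>i. j < i \<and> i \<le> k \<and> sat l H T t i f))"
| "sat l H T t k (Next I f) \<longleftrightarrow> enat (k + 1) < l \<and> sat l H T t (k + 1) f \<and> in_int (t (k + 1) - t k) I"
| "sat l H T t k (Until I f g) \<longleftrightarrow> (\<exists>j. k \<le> j \<and> enat j < l \<and> in_int (t j - t k) I \<and> sat l H T t j g \<and> (\<forall>i. k \<le> i \<and> i < j \<longrightarrow> sat l H T t i f))"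
| "sat l H T t k (Release I f g) \<longleftrightarrow> (\<forall>j. k \<le> j \<and> enat j < l \<longrightarrow> in_int (t j - t k) I \<longrightarrow> sat l H T t j g \<or> (\<exists>i. k \<le> i \<and> i < j \<and> sat l H T t i f))"

definition msat :: "'a htrace \<Rightarrow> nat \<Rightarrow> 'a mformula \<Rightarrow> bool" where
  "msat M k f = sat (len M) (hh M) (tt M) (tau M) k f"

definition MHT :: "'a mformula set \<Rightarrow> 'a htrace set" where
  "MHT \<Gamma> = {M. wf_trace M \<and> (\<forall>f\<in>\<Gamma>. msat M 0 f)}"

definition total :: "'a htrace \<Rightarrow> bool" where
  "total M \<longleftrightarrow> (\<forall>i. enat i < len M \<longrightarrow> hh M i = tt M i)"

definition strictly_below :: "enat \<Rightarrow> (nat \<Rightarrow> 'a set) \<Rightarrow> (nat \<Rightarrow> 'a set) \<Rightarrow> bool" where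
  "strictly_below l H T \<longleftrightarrow> (\<forall>i. enat i < l \<longrightarrow> H i \<subseteq> T i) \<and> (\<exists>i. enat i < l \<and> H i \<noteq> T i)"

definition MEL :: "'a mformula set \<Rightarrow> 'a htrace set" where
  "MEL \<Gamma> = {M \<in> MHT \<Gamma>. total M \<and>
     \<not> (\<exists>H. strictly_below (len M) H (tt M) \<and> HTrace (len M) H (tt M) (tau M) \<in> MHT \<Gamma>)}"

definition strongly_equivalent :: "'a mformula set \<Rightarrow> 'a mformula set \<Rightarrow> bool" where
  "strongly_equivalent \<Gamma>1 \<Gamma>2 \<longleftrightarrow> (\<forall>\<Delta>. MEL (\<Gamma>1 \<union> \<Delta>) = MEL (\<Gamma>2 \<union> \<Delta>))"

end

(* If M = <H,T> is an MHT model of Gamma1, so is its there-trace <T,T> (persistence).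
   Adding as facts the formulas (next^i p) for all atoms p of T_i makes <T,T> a metric
   equilibrium model of Gamma1 plus these facts, hence of Gamma2 plus them, so <T,T> is an MHT
   model of Gamma2.  If H differs from T, add instead the facts for H together with the
   implications (next^j q) -> (next^i p) between all atoms of T - H: now M blocks <T,T> from being
   an equilibrium model for Gamma1, hence <T,T> is blocked for Gamma2 as well, and the
   implications leave M itself as the only possible blocking trace, so M is an MHT model of
   Gamma2.  The converse holds because equilibrium models are determined by
   MHT models and MHT(Gamma \<union> Delta) = MHT Gamma \<inter> MHT Delta. *)

theory Submission
  imports Defs
begin

lemma enat_less_if_le_less: "i \<le> k \<Longrightarrow> enat k < l \<Longrightarrow> enat i < l"
  using enat_ord_simps(1) order_le_less_trans by blast

lemma enat_less_if_less_less: "i < k \<Longrightarrow> enat k < l \<Longrightarrow> enat i < l"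
  using enat_less_if_le_less less_imp_le by blast

primrec nexts :: "nat \<Rightarrow> 'a mformula \<Rightarrow> 'a mformula" where
  "nexts 0 f = f"
| "nexts (Suc n) f = Next (0, \<infinity>) (nexts n f)"

lemma sat_nexts:
  assumes "enat k < l"
  shows "sat l H T t k (nexts n f) \<longleftrightarrow> enat (k + n) < l \<and> sat l H T t (k + n) f"
  using assms
proof (induction n arbitrary: k)
  case (Suc n)
  have "enat (k + Suc n) < l \<Longrightarrow> enat (Suc k) < l"
    using enat_less_if_le_less[of "Suc k" "k + Suc n" l] by simp
  then show ?case
    using Suc.IH[of "Suc k"] by (auto simp: in_int_def)
qed simp

lemma sat_persistence:
  assumes "\<forall>i. enat i < l \<longrightarrow> H i \<subseteq> T i" "enat k < l" "sat l H T t k f"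
  shows "sat l T T t k f"
  using assms(2,3)
proof (induction f arbitrary: k)
  case (Atom p)
  then show ?case using assms(1) by auto
next
  case (Prev I f)
  then show ?case using enat_less_if_le_less[of "k - 1" k l] by auto
next
  case (Since I f g)
  then show ?case using enat_less_if_le_less by (simp; meson)
next
  case (Trigger I f g)
  then show ?case using enat_less_if_le_less by (simp; meson)
next
  case (Until I f g)
  then show ?case using enat_less_if_less_less by (simp; meson)
next
  case (Release I f g)
  then show ?case using enat_less_if_less_less by (simp; meson)
qed auto

lemma sat_cong_here:
  assumes "\<forall>i. enat i < l \<longrightarrow> H i = H' i" "enat k < l"
  shows "sat l H T t k f \<longleftrightarrow> sat l H' T t k f"
  using assms(2)
proof (induction f arbitrary: k)
  case (Atom p)
  then show ?case using assms(1) by auto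
next
  case (Prev I f)
  then show ?case using enat_less_if_le_less[of "k - 1" k l] by auto
next
  case (Since I f g)
  then show ?case using enat_less_if_le_less by (simp; meson)
next
  case (Trigger I f g)
  then show ?case using enat_less_if_le_less by (simp; meson)
next
  case (Until I f g)
  then show ?case using enat_less_if_less_less by (simp; meson)
next
  case (Release I f g)
  then show ?case using enat_less_if_less_less by (simp; meson)
qed auto

lemma MHT_Un: "MHT (\<Gamma> \<union> \<Delta>) = MHT \<Gamma> \<inter> MHT \<Delta>"
  by (auto simp: MHT_def)

lemma MEL_subset_MHT: "MEL \<Gamma> \<subseteq> MHT \<Gamma>"
  by (auto simp: MEL_def)

lemma MEL_cong_MHT: "MHT \<Gamma>1 = MHT \<Gamma>2 \<Longrightarrow> MEL \<Gamma>1 = MEL \<Gamma>2"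
  by (simp add: MEL_def)

lemma HTrace_in_MHT_cong_here:
  assumes "\<forall>i. enat i < l \<longrightarrow> H i = H' i"
  shows "HTrace l H T t \<in> MHT \<Gamma> \<longleftrightarrow> HTrace l H' T t \<in> MHT \<Gamma>"
  using assms sat_cong_here[OF assms, of 0]
  by (auto simp: MHT_def msat_def wf_trace_def zero_enat_def)

lemma there_trace_in_MHT:
  assumes "HTrace l H T t \<in> MHT \<Gamma>"
  shows "HTrace l T T t \<in> MHT \<Gamma>"
proof -
  from assms have wf: "wf_trace (HTrace l H T t)" and sat: "\<forall>f\<in>\<Gamma>. sat l H T t 0 f"
    by (simp_all add: MHT_def msat_def)
  then have "enat 0 < l" and "\<forall>i. enat i < l \<longrightarrow> H i \<subseteq> T i"
    by (simp_all add: wf_trace_def zero_enat_def)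
  with sat have "\<forall>f\<in>\<Gamma>. sat l T T t 0 f"
    using sat_persistence by blast
  with wf show ?thesis
    by (simp add: MHT_def msat_def wf_trace_def)
qed

definition trace_facts :: "enat \<Rightarrow> (nat \<Rightarrow> 'a set) \<Rightarrow> 'a mformula set" where
  "trace_facts l S = {nexts i (Atom p) | i p. enat i < l \<and> p \<in> S i}"

definition gap_rules :: "enat \<Rightarrow> (nat \<Rightarrow> 'a set) \<Rightarrow> (nat \<Rightarrow> 'a set) \<Rightarrow> 'a mformula set" where
  "gap_rules l H T = {Impl (nexts j (Atom q)) (nexts i (Atom p)) | i j p q.
     enat i < l \<and> enat j < l \<and> p \<in> T i - H i \<and> q \<in> T j - H j}"

lemma sat_nexts_Atom_0:
  assumes "0 < l"
  shows "sat l H T t 0 (nexts i (Atom p)) \<longleftrightarrow> enat i < l \<and> p \<in> H i"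
  using sat_nexts[of 0 l H T t i "Atom p"] assms by (simp add: zero_enat_def)

lemma HTrace_in_MHT_trace_facts:
  "HTrace l H T t \<in> MHT (trace_facts l S) \<longleftrightarrow>
     wf_trace (HTrace l H T t) \<and> (\<forall>i. enat i < l \<longrightarrow> S i \<subseteq> H i)"
proof (cases "wf_trace (HTrace l H T t)")
  case True
  then have "0 < l" by (simp add: wf_trace_def)
  have "(\<forall>f\<in>trace_facts l S. sat l H T t 0 f) \<longleftrightarrow>
      (\<forall>i p. enat i < l \<and> p \<in> S i \<longrightarrow> sat l H T t 0 (nexts i (Atom p)))"
    unfolding trace_facts_def by blast
  with True show ?thesis
    by (auto simp: MHT_def msat_def sat_nexts_Atom_0[OF \<open>0 < l\<close>])
qed (simp add: MHT_def)

lemma HTrace_in_MHT_gap_rules: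
  "HTrace l H' T t \<in> MHT (gap_rules l H T) \<longleftrightarrow> wf_trace (HTrace l H' T t) \<and>
     (\<forall>i j p q. enat i < l \<and> enat j < l \<and> p \<in> T i - H i \<and> q \<in> T j - H j \<and> q \<in> H' j
        \<longrightarrow> p \<in> H' i)"
proof (cases "wf_trace (HTrace l H' T t)")
  case True
  then have "0 < l" and "\<forall>i. enat i < l \<longrightarrow> H' i \<subseteq> T i" by (simp_all add: wf_trace_def)
  have "(\<forall>f\<in>gap_rules l H T. sat l H' T t 0 f) \<longleftrightarrow>
      (\<forall>i j p q. enat i < l \<and> enat j < l \<and> p \<in> T i - H i \<and> q \<in> T j - H j
         \<longrightarrow> sat l H' T t 0 (Impl (nexts j (Atom q)) (nexts i (Atom p))))"
    unfolding gap_rules_def by blast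
  with True \<open>\<forall>i. enat i < l \<longrightarrow> H' i \<subseteq> T i\<close> show ?thesis
    by (simp add: MHT_def msat_def sat_nexts_Atom_0[OF \<open>0 < l\<close>]) blast
qed (simp add: MHT_def)

lemma total_trace_in_MEL_Un_trace_facts:
  assumes "HTrace l T T t \<in> MHT \<Gamma>"
  shows "HTrace l T T t \<in> MEL (\<Gamma> \<union> trace_facts l T)"
proof -
  have "wf_trace (HTrace l T T t)"
    using assms by (simp add: MHT_def)
  then have "HTrace l T T t \<in> MHT (trace_facts l T)"
    by (simp add: HTrace_in_MHT_trace_facts)
  moreover have "\<not> strictly_below l H T" if "HTrace l H T t \<in> MHT (trace_facts l T)" for H
    using that by (auto simp: HTrace_in_MHT_trace_facts strictly_below_def)
  ultimately show ?thesis
    using assms by (auto simp: MEL_def MHT_Un total_def)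
qed

lemma here_eq_if_strictly_below_model_gap_rules:
  assumes "HTrace l H' T t \<in> MHT (trace_facts l H \<union> gap_rules l H T)"
    and "strictly_below l H' T"
  shows "\<forall>i. enat i < l \<longrightarrow> H' i = H i"
proof (rule ccontr)
  from assms(1) have facts: "HTrace l H' T t \<in> MHT (trace_facts l H)"
    and gaps: "HTrace l H' T t \<in> MHT (gap_rules l H T)"
    by (simp_all add: MHT_Un)
  from facts have H_H': "\<forall>i. enat i < l \<longrightarrow> H i \<subseteq> H' i"
    by (simp add: HTrace_in_MHT_trace_facts)
  from gaps have H'_T: "\<forall>i. enat i < l \<longrightarrow> H' i \<subseteq> T i"
    by (simp add: HTrace_in_MHT_gap_rules wf_trace_def)
  from gaps have gap: "\<forall>i j p q. enat i < l \<and> enat j < l \<and> p \<in> T i - H i \<and> q \<in> T j - H j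
      \<and> q \<in> H' j \<longrightarrow> p \<in> H' i"
    unfolding HTrace_in_MHT_gap_rules by blast
  assume "\<not> ?thesis"
  then obtain j q where "enat j < l" "q \<in> H' j" "q \<notin> H j"
    using H_H' by blast
  then have "\<forall>i. enat i < l \<longrightarrow> T i \<subseteq> H' i"
    using gap H_H' H'_T by blast
  with assms(2) show False
    by (auto simp: strictly_below_def)
qed

lemma there_trace_in_MHT_if_strongly_equivalent:
  assumes "strongly_equivalent \<Gamma>1 \<Gamma>2" and "HTrace l H T t \<in> MHT \<Gamma>1"
  shows "HTrace l T T t \<in> MHT \<Gamma>2"
proof -
  have "HTrace l T T t \<in> MEL (\<Gamma>1 \<union> trace_facts l T)"
    using total_trace_in_MEL_Un_trace_facts there_trace_in_MHT[OF assms(2)] .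
  then have "HTrace l T T t \<in> MEL (\<Gamma>2 \<union> trace_facts l T)"
    using assms(1) by (simp add: strongly_equivalent_def)
  then show ?thesis
    using MEL_subset_MHT MHT_Un by blast
qed

lemma here_trace_in_MHT_if_strongly_equivalent:
  assumes se: "strongly_equivalent \<Gamma>1 \<Gamma>2"
    and here_1: "HTrace l H T t \<in> MHT \<Gamma>1" and there_2: "HTrace l T T t \<in> MHT \<Gamma>2"
    and below: "strictly_below l H T"
  shows "HTrace l H T t \<in> MHT \<Gamma>2"
proof -
  define \<Delta> where "\<Delta> = trace_facts l H \<union> gap_rules l H T"
  have "wf_trace (HTrace l H T t)" and "wf_trace (HTrace l T T t)"
    using here_1 there_2 by (simp_all add: MHT_def)
  with here_1 there_2 below
  have here_1\<Delta>: "HTrace l H T t \<in> MHT (\<Gamma>1 \<union> \<Delta>)" and there_2\<Delta>: "HTrace l T T t \<in> MHT (\<Gamma>2 \<union> \<Delta>)"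
    by (auto simp: \<Delta>_def MHT_Un HTrace_in_MHT_trace_facts HTrace_in_MHT_gap_rules strictly_below_def)
  from here_1\<Delta> below have "HTrace l T T t \<notin> MEL (\<Gamma>1 \<union> \<Delta>)"
    by (auto simp: MEL_def)
  with se have "HTrace l T T t \<notin> MEL (\<Gamma>2 \<union> \<Delta>)"
    by (simp add: strongly_equivalent_def)
  with there_2\<Delta> obtain H' where "strictly_below l H' T" and "HTrace l H' T t \<in> MHT \<Delta>"
    and H'_2: "HTrace l H' T t \<in> MHT \<Gamma>2"
    by (auto simp: MEL_def total_def MHT_Un)
  then have "\<forall>i. enat i < l \<longrightarrow> H' i = H i"
    using here_eq_if_strictly_below_model_gap_rules by (simp add: \<Delta>_def)
  with H'_2 show ?thesis
    using HTrace_in_MHT_cong_here by blast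
qed

lemma MHT_subset_if_strongly_equivalent:
  assumes se: "strongly_equivalent \<Gamma>1 \<Gamma>2"
  shows "MHT \<Gamma>1 \<subseteq> MHT \<Gamma>2"
proof
  fix M assume "M \<in> MHT \<Gamma>1"
  moreover obtain l H T t where M: "M = HTrace l H T t"
    by (cases M)
  ultimately have here_1: "HTrace l H T t \<in> MHT \<Gamma>1"
    by simp
  have there_2: "HTrace l T T t \<in> MHT \<Gamma>2"
    using there_trace_in_MHT_if_strongly_equivalent[OF se here_1] .
  show "M \<in> MHT \<Gamma>2"
  proof (cases "strictly_below l H T")
    case False
    with here_1 have "\<forall>i. enat i < l \<longrightarrow> T i = H i"
      by (auto simp: MHT_def wf_trace_def strictly_below_def)
    with there_2 M show ?thesis
      using HTrace_in_MHT_cong_here by blast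
  next
    case True
    with M show ?thesis
      using here_trace_in_MHT_if_strongly_equivalent[OF se here_1 there_2] by simp
  qed
qed

theorem theorem4:
  fixes \<Gamma>1 \<Gamma>2 :: "('a::finite) mformula set"
  shows "strongly_equivalent \<Gamma>1 \<Gamma>2 \<longleftrightarrow> MHT \<Gamma>1 = MHT \<Gamma>2"
proof
  assume se: "strongly_equivalent \<Gamma>1 \<Gamma>2"
  then have "strongly_equivalent \<Gamma>2 \<Gamma>1"
    by (simp add: strongly_equivalent_def)
  with se show "MHT \<Gamma>1 = MHT \<Gamma>2"
    using MHT_subset_if_strongly_equivalent by blast
next
  assume "MHT \<Gamma>1 = MHT \<Gamma>2"
  then show "strongly_equivalent \<Gamma>1 \<Gamma>2"
    by (simp add: strongly_equivalent_def MHT_Un MEL_cong_MHT)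
qed

end
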